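(* For any simplicial complex $K$ and any positive integer $m$, there exists a positive integer $k$ such that the $k$-times iterated barycentric subdivision $K^{(k)}$ of $K$ is $m$-fine.
   Context: For vertices $v,w$ of a simplicial complex $K$, a sequence $p=(\sigma_1,\dots,\sigma_N)$ of $1$-simplices links $(v,w)$ if $v\in\sigma_1$, $w\in\sigma_N$ and $\sigma_i\cap\sigma_{i+1}\ne\varnothing$ for all $i$; its length is $N$. The diameter of a subcomplex $A\subset K$ is $\max_{v,w\in A_0}\min_{p\text{ links }(v,w)}\mathrm{len}(p)$. $K$ is $m$-fine if for every subcomplex $A\subset K$ with diameter $\le m$ one can choose a contractible subcomplex $Z_A$ containing $A$ in such a way that $Z_A\subset Z_B$ whenever $A\subset B$. *)

theory Defs
  imports "HOL-Analysis.Analysis" "HOL-Library.FSet" "HOL-Library.Extended_Nat"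
begin

definition simplicial_complex :: "'v set set \<Rightarrow> bool" where
  "simplicial_complex K \<longleftrightarrow>
     (\<forall>\<sigma>\<in>K. finite \<sigma> \<and> \<sigma> \<noteq> {}) \<and>
     (\<forall>\<sigma>\<in>K. \<forall>\<tau>. \<tau> \<subseteq> \<sigma> \<and> \<tau> \<noteq> {} \<longrightarrow> \<tau> \<in> K)"

definition vertices :: "'v set set \<Rightarrow> 'v set" where
  "vertices K = \<Union>K"

definition subcomplex :: "'v set set \<Rightarrow> 'v set set \<Rightarrow> bool" where
  "subcomplex K A \<longleftrightarrow> A \<subseteq> K \<and> simplicial_complex A"

definition links :: "'v set set \<Rightarrow> 'v set list \<Rightarrow> 'v \<Rightarrow> 'v \<Rightarrow> bool" where
  "links K p v w \<longleftrightarrow> p \<noteq> [] \<and> (\<forall>\<sigma>\<in>set p. \<sigma> \<in> K \<and> card \<sigma> = 2) \<and>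
     v \<in> hd p \<and> w \<in> last p \<and>
     (\<forall>i. Suc i < length p \<longrightarrow> p ! i \<inter> p ! Suc i \<noteq> {})"

definition link_dist :: "'v set set \<Rightarrow> 'v \<Rightarrow> 'v \<Rightarrow> enat" where
  "link_dist K v w = (INF p\<in>{p. links K p v w}. enat (length p))"

definition diameter :: "'v set set \<Rightarrow> 'v set set \<Rightarrow> enat" where
  "diameter K A = (SUP v\<in>vertices A. SUP w\<in>vertices A. link_dist K v w)"

text \<open>Geometric realization: points are barycentric coordinate functions, with
  the coherent (weak) topology with respect to the closed simplices.\<close>

definition closed_simplex :: "'v set \<Rightarrow> ('v \<Rightarrow> real) set" where
  "closed_simplex \<sigma> = {x. (\<forall>v. 0 \<le> x v) \<and> (\<forall>v. v \<notin> \<sigma> \<longrightarrow> x v = 0) \<and> sum x \<sigma> = 1}"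

definition realization :: "'v set set \<Rightarrow> ('v \<Rightarrow> real) topology" where
  "realization K = topology (\<lambda>U. U \<subseteq> (\<Union>\<sigma>\<in>K. closed_simplex \<sigma>) \<and>
      (\<forall>\<sigma>\<in>K. openin (top_of_set (closed_simplex \<sigma>)) (U \<inter> closed_simplex \<sigma>)))"

definition contractible_complex :: "'v set set \<Rightarrow> bool" where
  "contractible_complex K \<longleftrightarrow> contractible_space (realization K)"

definition m_fine :: "nat \<Rightarrow> 'v set set \<Rightarrow> bool" where
  "m_fine m K \<longleftrightarrow> (\<exists>Z. (\<forall>A. subcomplex K A \<and> A \<noteq> {} \<and> diameter K A \<le> enat m \<longrightarrow>
        subcomplex K (Z A) \<and> A \<subseteq> Z A \<and> contractible_complex (Z A)) \<and>
      (\<forall>A B. subcomplex K A \<and> A \<noteq> {} \<and> diameter K A \<le> enat m \<and>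
             subcomplex K B \<and> B \<noteq> {} \<and> diameter K B \<le> enat m \<and> A \<subseteq> B \<longrightarrow> Z A \<subseteq> Z B))"

text \<open>Vertex type closed under forming finite sets, so that barycentric subdivision
  can be iterated on a single type.\<close>
datatype 'a vtx = Base 'a | Bary "'a vtx fset"

text \<open>Barycentric subdivision: vertices are simplices of K (encoded as Bary),
  simplices are nonempty finite chains of simplices of K.\<close>
definition bsd :: "'a vtx set set \<Rightarrow> 'a vtx set set" where
  "bsd K = {(\<lambda>s. Bary (Abs_fset s)) ` C | C. C \<subseteq> K \<and> finite C \<and> C \<noteq> {} \<and>
              (\<forall>s\<in>C. \<forall>t\<in>C. s \<subseteq> t \<or> t \<subseteq> s)}"

definition iterated_bsd :: "nat \<Rightarrow> 'a set set \<Rightarrow> 'a vtx set set" where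
  "iterated_bsd k K = (bsd ^^ k) ((`) Base ` K)"

end

theory Submission
  imports Defs
begin

text \<open>Let \<open>k = m + 2\<close> and let \<open>A\<close> be a subcomplex of the \<open>k\<close>-fold subdivision of \<open>K\<close> of
  diameter at most \<open>m\<close>. A walk in a barycentric subdivision projects to a walk of half the
  length between carrier vertices in the complex before it; applying this \<open>m\<close> times, the
  carriers in the first subdivision \<open>K'\<close> of any two vertices of \<open>A\<close> meet. Fix a vertex \<open>y\<close> of
  \<open>A\<close>: its carrier is a simplex of \<open>K'\<close>, i.e. a chain of simplices of \<open>K\<close>, and every vertex
  \<open>u\<close> of the smallest member of this chain lies in the carrier in \<open>K\<close> of every simplex of \<open>A\<close>.
  So the subcomplex of \<open>K\<close> spanned by these carriers is a cone with apex \<open>u\<close>; its \<open>k\<close>-fold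
  subdivision \<open>Z\<^sub>A\<close> contains \<open>A\<close>, is monotone in \<open>A\<close>, and is contractible because
  barycentric subdivision preserves contractibility of the geometric realization.\<close>

lemma simplicial_complex_finite: "simplicial_complex K \<Longrightarrow> \<sigma> \<in> K \<Longrightarrow> finite \<sigma>"
  unfolding simplicial_complex_def by blast

lemma simplicial_complex_nonempty: "simplicial_complex K \<Longrightarrow> \<sigma> \<in> K \<Longrightarrow> \<sigma> \<noteq> {}"
  unfolding simplicial_complex_def by blast

lemma simplicial_complex_face:
  "simplicial_complex K \<Longrightarrow> \<sigma> \<in> K \<Longrightarrow> \<tau> \<subseteq> \<sigma> \<Longrightarrow> \<tau> \<noteq> {} \<Longrightarrow> \<tau> \<in> K"
  unfolding simplicial_complex_def by blast

section \<open>Geometric realization\<close>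

abbreviation polyhedron :: "'v set set \<Rightarrow> ('v \<Rightarrow> real) set" where
  "polyhedron K \<equiv> (\<Union>\<sigma>\<in>K. closed_simplex \<sigma>)"

lemma istopology_realization:
  "istopology (\<lambda>U. U \<subseteq> polyhedron K \<and>
      (\<forall>\<sigma>\<in>K. openin (top_of_set (closed_simplex \<sigma>)) (U \<inter> closed_simplex \<sigma>)))"
  unfolding istopology_def
proof (intro conjI allI impI ballI)
  fix S T \<sigma>
  assume "S \<subseteq> polyhedron K \<and> (\<forall>\<sigma>\<in>K. openin (top_of_set (closed_simplex \<sigma>)) (S \<inter> closed_simplex \<sigma>))"
    and "T \<subseteq> polyhedron K \<and> (\<forall>\<sigma>\<in>K. openin (top_of_set (closed_simplex \<sigma>)) (T \<inter> closed_simplex \<sigma>))"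
    and "\<sigma> \<in> K"
  then have "openin (top_of_set (closed_simplex \<sigma>)) ((S \<inter> closed_simplex \<sigma>) \<inter> (T \<inter> closed_simplex \<sigma>))"
    by (simp add: openin_Int)
  then show "openin (top_of_set (closed_simplex \<sigma>)) (S \<inter> T \<inter> closed_simplex \<sigma>)"
    by (simp add: Int_ac)
next
  fix \<U> \<sigma>
  assume "\<forall>U\<in>\<U>. U \<subseteq> polyhedron K \<and> (\<forall>\<sigma>\<in>K. openin (top_of_set (closed_simplex \<sigma>)) (U \<inter> closed_simplex \<sigma>))"
    and "\<sigma> \<in> K"
  then have "openin (top_of_set (closed_simplex \<sigma>)) (\<Union>U\<in>\<U>. U \<inter> closed_simplex \<sigma>)"
    by (intro openin_Union) auto
  then show "openin (top_of_set (closed_simplex \<sigma>)) (\<Union>\<U> \<inter> closed_simplex \<sigma>)"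
    unfolding Int_Union2 .
qed blast+

lemma openin_realization:
  "openin (realization K) U \<longleftrightarrow> U \<subseteq> polyhedron K \<and>
      (\<forall>\<sigma>\<in>K. openin (top_of_set (closed_simplex \<sigma>)) (U \<inter> closed_simplex \<sigma>))"
  unfolding realization_def using istopology_realization[of K] by simp

lemma topspace_realization [simp]: "topspace (realization K) = polyhedron K"
proof -
  have "openin (realization K) (polyhedron K)"
    unfolding openin_realization
  proof (intro conjI ballI)
    fix \<sigma> assume "\<sigma> \<in> K"
    then have "polyhedron K \<inter> closed_simplex \<sigma> = topspace (top_of_set (closed_simplex \<sigma>))"
      by auto
    then show "openin (top_of_set (closed_simplex \<sigma>)) (polyhedron K \<inter> closed_simplex \<sigma>)"
      by (metis openin_topspace)
  qed auto
  then have "polyhedron K \<subseteq> topspace (realization K)"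
    by (rule openin_subset)
  moreover have "topspace (realization K) \<subseteq> polyhedron K"
    using openin_realization[of K "topspace (realization K)"] by simp
  ultimately show ?thesis
    by (rule subset_antisym[rotated])
qed

lemma quotient_map_realization:
  "quotient_map (sum_topology (\<lambda>\<sigma>. top_of_set (closed_simplex \<sigma>)) K) (realization K) snd"
  unfolding quotient_map_def
proof (intro conjI allI impI)
  show "snd ` topspace (sum_topology (\<lambda>\<sigma>. top_of_set (closed_simplex \<sigma>)) K) = topspace (realization K)"
    by (auto simp: snd_image_Sigma)
  fix U assume "U \<subseteq> topspace (realization K)"
  moreover have "{x. (\<sigma>, x) \<in> {p \<in> Sigma K closed_simplex. snd p \<in> U}} = U \<inter> closed_simplex \<sigma>"
    if "\<sigma> \<in> K" for \<sigma>
    using that by auto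
  ultimately show "openin (sum_topology (\<lambda>\<sigma>. top_of_set (closed_simplex \<sigma>)) K)
      {x \<in> topspace (sum_topology (\<lambda>\<sigma>. top_of_set (closed_simplex \<sigma>)) K). snd x \<in> U} \<longleftrightarrow>
    openin (realization K) U"
    by (simp add: openin_sum_topology openin_realization o_def)
qed

lemma continuous_map_from_sum_topology:
  assumes "\<And>i. i \<in> I \<Longrightarrow> continuous_map (X i) Y (\<lambda>x. f (i, x))"
  shows "continuous_map (sum_topology X I) Y f"
  unfolding continuous_map_def
proof (intro conjI allI impI)
  show "f \<in> topspace (sum_topology X I) \<rightarrow> topspace Y"
    using assms by (force simp: continuous_map_def)
  fix U assume U: "openin Y U"
  have "openin (X i) {x. (i, x) \<in> {p \<in> topspace (sum_topology X I). f p \<in> U}}" if "i \<in> I" for i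
  proof -
    have "{x. (i, x) \<in> {p \<in> topspace (sum_topology X I). f p \<in> U}} = {x \<in> topspace (X i). f (i, x) \<in> U}"
      using that by auto
    then show ?thesis
      using openin_continuous_map_preimage[OF assms[OF that] U] by simp
  qed
  then show "openin (sum_topology X I) {p \<in> topspace (sum_topology X I). f p \<in> U}"
    by (auto simp: openin_sum_topology)
qed

lemma continuous_map_from_prod_sum_topology:
  assumes "\<And>i. i \<in> I \<Longrightarrow> continuous_map (prod_topology Z (X i)) Y (\<lambda>(z, x). f (z, (i, x)))"
  shows "continuous_map (prod_topology Z (sum_topology X I)) Y f"
  unfolding continuous_map_def
proof (intro conjI allI impI)
  show "f \<in> topspace (prod_topology Z (sum_topology X I)) \<rightarrow> topspace Y"
    using assms by (force simp: continuous_map_def)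
  fix U assume U: "openin Y U"
  define P where "P = {p \<in> topspace (prod_topology Z (sum_topology X I)). f p \<in> U}"
  show "openin (prod_topology Z (sum_topology X I)) P"
  proof (subst openin_subopen, intro ballI)
    fix p assume "p \<in> P"
    then obtain z i x where p: "p = (z, (i, x))" "i \<in> I" "z \<in> topspace Z" "x \<in> topspace (X i)"
      "f (z, (i, x)) \<in> U"
      unfolding P_def by auto
    define W where "W = {q \<in> topspace (prod_topology Z (X i)). f (fst q, (i, snd q)) \<in> U}"
    have "openin (prod_topology Z (X i)) W"
      using openin_continuous_map_preimage[OF assms[OF p(2)] U] by (simp add: W_def case_prod_beta)
    moreover have "(z, x) \<in> W"
      using p unfolding W_def by simp
    ultimately have "\<exists>V1 V2. openin Z V1 \<and> openin (X i) V2 \<and> z \<in> V1 \<and> x \<in> V2 \<and> V1 \<times> V2 \<subseteq> W"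
      unfolding openin_prod_topology_alt by (elim allE impE)
    then obtain V1 V2 where V: "openin Z V1" "openin (X i) V2" "z \<in> V1" "x \<in> V2" "V1 \<times> V2 \<subseteq> W"
      by blast
    show "\<exists>T. openin (prod_topology Z (sum_topology X I)) T \<and> p \<in> T \<and> T \<subseteq> P"
    proof (intro exI conjI)
      show "openin (prod_topology Z (sum_topology X I)) (V1 \<times> Pair i ` V2)"
        using V open_map_component_injection[OF p(2), of X] by (simp add: openin_prod_Times_iff open_map_def)
      show "p \<in> V1 \<times> Pair i ` V2"
        using p V by auto
      show "V1 \<times> Pair i ` V2 \<subseteq> P"
        using V p(2) unfolding P_def W_def by auto
    qed
  qed
qed

lemma continuous_map_from_realization:
  assumes "\<And>\<sigma>. \<sigma> \<in> K \<Longrightarrow> continuous_map (top_of_set (closed_simplex \<sigma>)) Y f"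
  shows "continuous_map (realization K) Y f"
proof (rule continuous_compose_quotient_map[OF quotient_map_realization])
  show "continuous_map (sum_topology (\<lambda>\<sigma>. top_of_set (closed_simplex \<sigma>)) K) Y (f \<circ> snd)"
    using assms by (intro continuous_map_from_sum_topology) simp
qed

lemma continuous_map_from_prod_realization:
  assumes "\<And>\<sigma>. \<sigma> \<in> K \<Longrightarrow>
    continuous_map (prod_topology (top_of_set {0..1}) (top_of_set (closed_simplex \<sigma>))) Y h"
  shows "continuous_map (prod_topology (top_of_set {0..1::real}) (realization K)) Y h"
proof -
  have "quotient_map (prod_topology (top_of_set {0..1::real}) (sum_topology (\<lambda>\<sigma>. top_of_set (closed_simplex \<sigma>)) K))
      (prod_topology (top_of_set {0..1}) (realization K)) (\<lambda>(t, p). (t, snd p))"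
    by (rule quotient_map_prod_right[OF _ _ quotient_map_realization])
      (simp_all add: compact_imp_locally_compact_space compact_space_subtopology Hausdorff_space_subtopology)
  moreover have "continuous_map (prod_topology (top_of_set {0..1}) (sum_topology (\<lambda>\<sigma>. top_of_set (closed_simplex \<sigma>)) K))
      Y (h \<circ> (\<lambda>(t, p). (t, snd p)))"
    using assms by (intro continuous_map_from_prod_sum_topology) (simp add: case_prod_beta')
  ultimately show ?thesis
    by (rule continuous_compose_quotient_map)
qed

lemma closed_simplex_nonneg: "x \<in> closed_simplex \<sigma> \<Longrightarrow> 0 \<le> x v"
  unfolding closed_simplex_def by blast

lemma closed_simplex_outside: "x \<in> closed_simplex \<sigma> \<Longrightarrow> v \<notin> \<sigma> \<Longrightarrow> x v = 0"
  unfolding closed_simplex_def by blast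

lemma closed_simplex_sum: "x \<in> closed_simplex \<sigma> \<Longrightarrow> sum x \<sigma> = 1"
  unfolding closed_simplex_def by blast

lemma closed_simplex_mono:
  assumes "finite \<tau>" "\<sigma> \<subseteq> \<tau>" and x: "x \<in> closed_simplex \<sigma>"
  shows "x \<in> closed_simplex \<tau>"
  unfolding closed_simplex_def
proof (intro CollectI conjI allI impI)
  fix v
  show "0 \<le> x v"
    using closed_simplex_nonneg[OF x] .
  show "v \<notin> \<tau> \<Longrightarrow> x v = 0"
    using closed_simplex_outside[OF x] assms(2) by blast
next
  have "sum x \<tau> = sum x \<sigma>"
    using assms closed_simplex_outside[OF x] by (intro sum.mono_neutral_right) auto
  then show "sum x \<tau> = 1"
    using closed_simplex_sum[OF x] by simp
qed

lemma closed_simplex_segment: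
  assumes x: "x \<in> closed_simplex \<sigma>" and y: "y \<in> closed_simplex \<sigma>" and t: "t \<in> {0..1}"
  shows "(\<lambda>v. (1 - t) * x v + t * y v) \<in> closed_simplex \<sigma>"
  unfolding closed_simplex_def
proof (intro CollectI conjI allI impI)
  fix v
  show "0 \<le> (1 - t) * x v + t * y v"
    using closed_simplex_nonneg[OF x] closed_simplex_nonneg[OF y] t by simp
  show "v \<notin> \<sigma> \<Longrightarrow> (1 - t) * x v + t * y v = 0"
    using closed_simplex_outside[OF x] closed_simplex_outside[OF y] by simp
next
  have "(\<Sum>v\<in>\<sigma>. (1 - t) * x v + t * y v) = (1 - t) * sum x \<sigma> + t * sum y \<sigma>"
    by (simp add: sum.distrib sum_distrib_left)
  then show "(\<Sum>v\<in>\<sigma>. (1 - t) * x v + t * y v) = 1"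
    using closed_simplex_sum[OF x] closed_simplex_sum[OF y] by simp
qed

lemma closed_closed_simplex:
  assumes "finite \<sigma>"
  shows "closed (closed_simplex \<sigma>)"
proof -
  have eq: "closed_simplex \<sigma> =
      (\<Inter>v. {x. 0 \<le> x v}) \<inter> (\<Inter>v\<in>-\<sigma>. {x. x v = 0}) \<inter> {x. (\<Sum>v\<in>\<sigma>. x v) = 1}"
    unfolding closed_simplex_def by auto
  have "closed {x::'a \<Rightarrow> real. 0 \<le> x v}" "closed {x::'a \<Rightarrow> real. x v = 0}" for v
    by (auto intro!: closed_Collect_le closed_Collect_eq continuous_intros)
  moreover have "closed {x::'a \<Rightarrow> real. (\<Sum>v\<in>\<sigma>. x v) = 1}"
    by (auto intro!: closed_Collect_eq continuous_intros)
  ultimately show ?thesis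
    unfolding eq by (intro closed_Int closed_INT) auto
qed

lemma continuous_map_into_realization:
  assumes f: "continuous_map X euclidean f" and T: "finite T" "T \<subseteq> K"
    and fin: "\<And>\<tau>. \<tau> \<in> T \<Longrightarrow> finite \<tau>"
    and im: "\<And>x. x \<in> topspace X \<Longrightarrow> f x \<in> polyhedron T"
  shows "continuous_map X (realization K) f"
  unfolding continuous_map_def topspace_realization
proof (intro conjI allI impI)
  show "f \<in> topspace X \<rightarrow> polyhedron K"
    using im T by blast
  fix V assume V: "openin (realization K) V"
  have cl: "closedin X {x \<in> topspace X. f x \<in> closed_simplex \<tau> - V}" if "\<tau> \<in> T" for \<tau>
  proof -
    have "openin (top_of_set (closed_simplex \<tau>)) (V \<inter> closed_simplex \<tau>)"
      using V T that unfolding openin_realization by blast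
    then have "closedin (top_of_set (closed_simplex \<tau>)) (closed_simplex \<tau> - (V \<inter> closed_simplex \<tau>))"
      by (metis closedin_diff closedin_topspace topspace_euclidean_subtopology)
    then have "closedin euclidean (closed_simplex \<tau> - V)"
      using closed_closed_simplex[OF fin[OF that]]
      by (metis Diff_Int2 Diff_Int_distrib2 Int_absorb closed_closedin closedin_closed_trans)
    then show ?thesis
      by (rule closedin_continuous_map_preimage[OF f])
  qed
  have "{x \<in> topspace X. f x \<in> V} =
      topspace X - (\<Union>\<tau>\<in>T. {x \<in> topspace X. f x \<in> closed_simplex \<tau> - V})"
    using im by blast
  then show "openin X {x \<in> topspace X. f x \<in> V}"
    using cl T(1) by (simp only:) (intro openin_diff openin_topspace closedin_Union; auto)
qed

lemma continuous_on_coordinate: "continuous_on S (\<lambda>x::'v \<Rightarrow> real. x v)"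
  by (rule continuous_on_subset[OF continuous_on_product_coordinates subset_UNIV])

lemma continuous_on_straight_line:
  fixes f :: "('v \<Rightarrow> real) \<Rightarrow> 'v \<Rightarrow> real"
  assumes cont: "continuous_on S f"
  shows "continuous_on (T \<times> S) (\<lambda>p. \<lambda>v. (1 - fst p) * snd p v + fst p * f (snd p) v)"
proof (rule continuous_on_coordinatewise_then_product)
  fix v
  have snd: "continuous_on (T \<times> S) snd"
    by (rule continuous_on_snd[OF continuous_on_id])
  have "continuous_on (T \<times> S) (\<lambda>p. f (snd p))"
    by (rule continuous_on_compose2[OF cont snd]) auto
  then have "continuous_on (T \<times> S) (\<lambda>p. f (snd p) v)"
    by (rule continuous_on_compose2[OF continuous_on_coordinate[of UNIV]]) simp
  moreover have "continuous_on (T \<times> S) (\<lambda>p. snd p v)"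
    by (rule continuous_on_compose2[OF continuous_on_coordinate[of UNIV] snd]) simp
  moreover have "continuous_on (T \<times> S) fst"
    by (rule continuous_on_fst[OF continuous_on_id])
  ultimately show "continuous_on (T \<times> S) (\<lambda>p. (1 - fst p) * snd p v + fst p * f (snd p) v)"
    by (intro continuous_on_add continuous_on_mult continuous_on_diff continuous_on_const) assumption+
qed

lemma homotopic_id_straight_line:
  fixes f :: "('v \<Rightarrow> real) \<Rightarrow> 'v \<Rightarrow> real"
  assumes L: "simplicial_complex L"
    and cont: "\<And>\<sigma>. \<sigma> \<in> L \<Longrightarrow> continuous_on (closed_simplex \<sigma>) f"
    and into: "\<And>\<sigma>. \<sigma> \<in> L \<Longrightarrow> \<exists>\<tau>\<in>L. \<sigma> \<subseteq> \<tau> \<and> f ` closed_simplex \<sigma> \<subseteq> closed_simplex \<tau>"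
  shows "homotopic_with (\<lambda>x. True) (realization L) (realization L) id f"
  unfolding homotopic_with_def
proof (intro exI conjI allI ballI)
  define H where "H = (\<lambda>p::real \<times> ('v \<Rightarrow> real). \<lambda>v. (1 - fst p) * snd p v + fst p * f (snd p) v)"
  show "continuous_map (prod_topology (top_of_set {0..1}) (realization L)) (realization L) H"
  proof (rule continuous_map_from_prod_realization)
    fix \<sigma> assume \<sigma>: "\<sigma> \<in> L"
    then obtain \<tau> where \<tau>: "\<tau> \<in> L" "\<sigma> \<subseteq> \<tau>" "f ` closed_simplex \<sigma> \<subseteq> closed_simplex \<tau>"
      using into[OF \<sigma>] by blast
    have "continuous_on ({0..1} \<times> closed_simplex \<sigma>) H"
      unfolding H_def by (rule continuous_on_straight_line[OF cont[OF \<sigma>]])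
    then have "continuous_map (top_of_set ({0..1} \<times> closed_simplex \<sigma>)) euclidean H"
      by simp
    moreover have "H p \<in> polyhedron {\<tau>}" if "p \<in> {0..1} \<times> closed_simplex \<sigma>" for p
    proof -
      have "snd p \<in> closed_simplex \<tau>"
        using that closed_simplex_mono[OF simplicial_complex_finite[OF L \<tau>(1)] \<tau>(2)] by auto
      moreover have "f (snd p) \<in> closed_simplex \<tau>"
        using that \<tau>(3) by (metis imageI mem_Times_iff subsetD)
      moreover have "fst p \<in> {0..1}"
        using that by (simp add: mem_Times_iff)
      ultimately show ?thesis
        unfolding H_def by (simp add: closed_simplex_segment)
    qed
    ultimately have "continuous_map (top_of_set ({0..1} \<times> closed_simplex \<sigma>)) (realization L) H"
      using \<tau>(1) simplicial_complex_finite[OF L \<tau>(1)]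
      by (intro continuous_map_into_realization[where T="{\<tau>}"]) auto
    then show "continuous_map (prod_topology (top_of_set {0..1}) (top_of_set (closed_simplex \<sigma>))) (realization L) H"
      by simp
  qed
  fix x
  show "H (0, x) = id x" "H (1, x) = f x"
    unfolding H_def by auto
qed simp

lemma contractible_realization_cone:
  assumes L: "simplicial_complex L" and cone: "\<And>\<sigma>. \<sigma> \<in> L \<Longrightarrow> insert u \<sigma> \<in> L"
  shows "contractible_space (realization L)"
proof -
  define apex where "apex = (\<lambda>v. if v = u then 1 else (0::real))"
  have "homotopic_with (\<lambda>x. True) (realization L) (realization L) id (\<lambda>x. apex)"
  proof (rule homotopic_id_straight_line[OF L])
    fix \<sigma> assume \<sigma>: "\<sigma> \<in> L"
    have "apex \<in> closed_simplex (insert u \<sigma>)"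
      using simplicial_complex_finite[OF L cone[OF \<sigma>]] unfolding closed_simplex_def apex_def
      by (simp add: sum.delta)
    then show "\<exists>\<tau>\<in>L. \<sigma> \<subseteq> \<tau> \<and> (\<lambda>x. apex) ` closed_simplex \<sigma> \<subseteq> closed_simplex \<tau>"
      using cone[OF \<sigma>] by (intro bexI[of _ "insert u \<sigma>"]) auto
  qed simp
  then show ?thesis
    unfolding contractible_space_def by blast
qed

section \<open>Barycentric subdivision and contractibility\<close>

abbreviation bary :: "'a vtx set \<Rightarrow> 'a vtx" where
  "bary s \<equiv> Bary (Abs_fset s)"

lemma fset_Abs_fset [simp]: "finite s \<Longrightarrow> fset (Abs_fset s) = s"
  by (simp add: Abs_fset_inverse)

lemma bary_inject: "finite s \<Longrightarrow> finite t \<Longrightarrow> bary s = bary t \<longleftrightarrow> s = t"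
  by (metis Abs_fset_inverse mem_Collect_eq vtx.inject(2))

lemma inj_on_bary: "(\<And>s. s \<in> C \<Longrightarrow> finite s) \<Longrightarrow> inj_on bary C"
  by (meson bary_inject inj_onI)

lemma mem_bsd: "\<sigma> \<in> bsd K \<longleftrightarrow> (\<exists>C. \<sigma> = bary ` C \<and> C \<subseteq> K \<and> finite C \<and> C \<noteq> {} \<and> chain\<^sub>\<subseteq> C)"
  unfolding bsd_def chain_subset_def by blast

lemma mem_bsdE:
  assumes "\<sigma> \<in> bsd K"
  obtains C where "\<sigma> = bary ` C" "C \<subseteq> K" "finite C" "C \<noteq> {}" "chain\<^sub>\<subseteq> C" "\<Union>C \<in> C"
  using assms Union_in_chain unfolding mem_bsd chain_subset_alt_def by metis

lemma bsd_mono: "K \<subseteq> L \<Longrightarrow> bsd K \<subseteq> bsd L"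
  unfolding mem_bsd subset_iff by (metis order_trans)

lemma bsd_pow_mono: "K \<subseteq> L \<Longrightarrow> (bsd ^^ n) K \<subseteq> (bsd ^^ n) L"
  by (induction n) (auto simp: bsd_mono)

lemma simplicial_complex_bsd:
  assumes "simplicial_complex K"
  shows "simplicial_complex (bsd K)"
  unfolding simplicial_complex_def
proof (intro conjI ballI allI impI)
  fix \<sigma> assume "\<sigma> \<in> bsd K"
  then show "finite \<sigma>" "\<sigma> \<noteq> {}"
    by (auto elim: mem_bsdE)
next
  fix \<sigma> \<tau> assume "\<sigma> \<in> bsd K" and \<tau>: "\<tau> \<subseteq> \<sigma> \<and> \<tau> \<noteq> {}"
  then obtain C where C: "\<sigma> = bary ` C" "C \<subseteq> K" "finite C" "chain\<^sub>\<subseteq> C"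
    by (elim mem_bsdE)
  define D where "D = {s \<in> C. bary s \<in> \<tau>}"
  have "\<tau> = bary ` D" "D \<noteq> {}"
    using \<tau> C(1) unfolding D_def by blast+
  moreover have "D \<subseteq> K" "finite D" "chain\<^sub>\<subseteq> D"
    using C(2-4) unfolding D_def chain_subset_def by auto
  ultimately show "\<tau> \<in> bsd K"
    unfolding mem_bsd by blast
qed

lemma simplicial_complex_bsd_pow: "simplicial_complex K \<Longrightarrow> simplicial_complex ((bsd ^^ n) K)"
  by (induction n) (auto simp: simplicial_complex_bsd)

lemma simplicial_complex_image_Base:
  assumes "simplicial_complex K"
  shows "simplicial_complex ((`) Base ` K)"
  unfolding simplicial_complex_def
proof (intro conjI ballI allI impI)
  fix \<sigma> assume "\<sigma> \<in> (`) Base ` K"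
  then show "finite \<sigma>" "\<sigma> \<noteq> {}"
    using assms simplicial_complex_finite simplicial_complex_nonempty by blast+
next
  fix \<sigma> \<tau> assume "\<sigma> \<in> (`) Base ` K" and \<tau>: "\<tau> \<subseteq> \<sigma> \<and> \<tau> \<noteq> {}"
  then obtain s where s: "s \<in> K" "\<sigma> = Base ` s"
    by blast
  define s' where "s' = {a \<in> s. Base a \<in> \<tau>}"
  have "\<tau> = Base ` s'" "s' \<subseteq> s" "s' \<noteq> {}"
    using \<tau> s(2) unfolding s'_def by blast+
  then show "\<tau> \<in> (`) Base ` K"
    using simplicial_complex_face[OF assms s(1)] by blast
qed

definition bary_weight :: "'a vtx \<Rightarrow> 'a vtx \<Rightarrow> real" where
  "bary_weight z u = (case z of Bary F \<Rightarrow> if u \<in> fset F then 1 / real (card (fset F)) else 0 | Base _ \<Rightarrow> 0)"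

lemma bary_weight_bary: "finite s \<Longrightarrow> bary_weight (bary s) u = (if u \<in> s then 1 / real (card s) else 0)"
  unfolding bary_weight_def by (simp add: Abs_fset_inverse)

lemma bary_weight_nonneg: "0 \<le> bary_weight z u"
  unfolding bary_weight_def by (auto split: vtx.split)

lemma sum_bary_weight:
  assumes "finite s" "s \<noteq> {}" "finite T" "s \<subseteq> T"
  shows "(\<Sum>u\<in>T. bary_weight (bary s) u) = 1"
proof -
  have "(\<Sum>u\<in>T. bary_weight (bary s) u) = (\<Sum>u\<in>s. 1 / real (card s))"
    using assms by (simp add: bary_weight_bary sum.If_cases Int_absorb1)
  then show ?thesis
    using assms by simp
qed

text \<open>The affine map \<open>|bsd L| \<rightarrow> |L|\<close> sending the vertex \<^term>\<open>bary s\<close> to the barycenter of \<open>s\<close>.\<close>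

definition from_bsd :: "('a vtx \<Rightarrow> real) \<Rightarrow> 'a vtx \<Rightarrow> real" where
  "from_bsd y u = (\<Sum>z | y z \<noteq> 0. y z * bary_weight z u)"

lemma from_bsd_eq_sum:
  assumes "y \<in> closed_simplex \<tau>" "finite \<tau>"
  shows "from_bsd y = (\<lambda>u. \<Sum>z\<in>\<tau>. y z * bary_weight z u)"
  unfolding from_bsd_def
  using assms closed_simplex_outside[OF assms(1)] by (intro ext sum.mono_neutral_left) auto

lemma from_bsd_eq_sum_chain:
  assumes "y \<in> closed_simplex (bary ` C)" "finite C" "\<And>s. s \<in> C \<Longrightarrow> finite s"
  shows "from_bsd y = (\<lambda>u. \<Sum>s\<in>C. y (bary s) * bary_weight (bary s) u)"
  using from_bsd_eq_sum[OF assms(1)] by (simp add: assms(2) sum.reindex[OF inj_on_bary[OF assms(3)]])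

lemma continuous_on_from_bsd:
  assumes "finite \<tau>"
  shows "continuous_on (closed_simplex \<tau>) from_bsd"
proof (rule continuous_on_coordinatewise_then_product)
  fix u
  have "continuous_on (closed_simplex \<tau>) (\<lambda>y. \<Sum>z\<in>\<tau>. y z * bary_weight z u)"
    by (intro continuous_on_sum continuous_on_mult continuous_on_coordinate continuous_on_const)
  then show "continuous_on (closed_simplex \<tau>) (\<lambda>y. from_bsd y u)"
    by (rule continuous_on_eq) (simp add: from_bsd_eq_sum[OF _ assms])
qed

lemma from_bsd_in_closed_simplex:
  assumes L: "simplicial_complex L" and C: "C \<subseteq> L" "finite C"
    and y: "y \<in> closed_simplex (bary ` C)"
  shows "from_bsd y \<in> closed_simplex (\<Union>C)"
proof -
  have fin: "\<And>s. s \<in> C \<Longrightarrow> finite s" and ne: "\<And>s. s \<in> C \<Longrightarrow> s \<noteq> {}"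
    using C L simplicial_complex_finite simplicial_complex_nonempty by blast+
  have from_bsd_y: "from_bsd y = (\<lambda>u. \<Sum>s\<in>C. y (bary s) * bary_weight (bary s) u)"
    by (rule from_bsd_eq_sum_chain[OF y C(2) fin])
  show ?thesis
    unfolding closed_simplex_def
  proof (intro CollectI conjI allI impI)
    fix u
    show "0 \<le> from_bsd y u"
      unfolding from_bsd_y
      by (intro sum_nonneg mult_nonneg_nonneg closed_simplex_nonneg[OF y] bary_weight_nonneg)
  next
    fix u assume "u \<notin> \<Union>C"
    then show "from_bsd y u = 0"
      unfolding from_bsd_y using fin by (intro sum.neutral) (auto simp: bary_weight_bary)
  next
    have "(\<Sum>u\<in>\<Union>C. from_bsd y u) = (\<Sum>s\<in>C. y (bary s) * (\<Sum>u\<in>\<Union>C. bary_weight (bary s) u))"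
      unfolding from_bsd_y sum_distrib_left by (rule sum.swap)
    also have "\<dots> = (\<Sum>s\<in>C. y (bary s))"
      using fin ne C(2) by (intro sum.cong refl) (simp add: Sup_upper sum_bary_weight)
    also have "\<dots> = sum y (bary ` C)"
      by (simp add: sum.reindex[OF inj_on_bary[OF fin]])
    finally show "(\<Sum>u\<in>\<Union>C. from_bsd y u) = 1"
      using closed_simplex_sum[OF y] by simp
  qed
qed

lemma continuous_map_from_bsd:
  assumes L: "simplicial_complex L"
  shows "continuous_map (realization (bsd L)) (realization L) from_bsd"
proof (rule continuous_map_from_realization)
  fix \<tau> assume "\<tau> \<in> bsd L"
  then obtain C where C: "\<tau> = bary ` C" "C \<subseteq> L" "finite C" "\<Union>C \<in> C"
    by (elim mem_bsdE)
  show "continuous_map (top_of_set (closed_simplex \<tau>)) (realization L) from_bsd"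
  proof (rule continuous_map_into_realization[where T="{\<Union>C}"])
    show "continuous_map (top_of_set (closed_simplex \<tau>)) euclidean from_bsd"
      using continuous_on_from_bsd[of \<tau>] C by simp
    show "finite {\<Union>C}" "{\<Union>C} \<subseteq> L" "\<And>\<sigma>. \<sigma> \<in> {\<Union>C} \<Longrightarrow> finite \<sigma>"
      using C L simplicial_complex_finite by auto
    show "\<And>x. x \<in> topspace (top_of_set (closed_simplex \<tau>)) \<Longrightarrow> from_bsd x \<in> polyhedron {\<Union>C}"
      using from_bsd_in_closed_simplex[OF L C(2,3)] C(1) by simp
  qed
qed

text \<open>A continuous map \<open>|L| \<rightarrow> |bsd L|\<close> in the opposite direction. If the coordinates of
  \<open>x\<close> are \<open>x v\<^sub>1 \<ge> \<dots> \<ge> x v\<^sub>n > 0\<close>, the weight of \<^term>\<open>bary S\<close> is nonzero only for the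
  initial segments \<open>S = {v\<^sub>1, \<dots>, v\<^sub>i}\<close> with \<open>x v\<^sub>i > x v\<^sub>i\<^sub>+\<^sub>1\<close>, and equals
  \<open>i (x v\<^sub>i - x v\<^sub>i\<^sub>+\<^sub>1)\<close>; these weights invert \<^const>\<open>from_bsd\<close>. We only need that
  \<^term>\<open>to_bsd (from_bsd y)\<close> stays in the simplex of \<open>y\<close>, and normalising the weights spares
  us computing their sum.\<close>

definition upper_gap :: "('a vtx \<Rightarrow> real) \<Rightarrow> 'a vtx set \<Rightarrow> real" where
  "upper_gap x S = Min (x ` S) - Max (insert 0 (x ` ({v. x v \<noteq> 0} - S)))"

definition to_bsd_weight :: "('a vtx \<Rightarrow> real) \<Rightarrow> 'a vtx \<Rightarrow> real" where
  "to_bsd_weight x z = (case z of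
     Bary F \<Rightarrow> if fset F = {} then 0 else real (card (fset F)) * max 0 (upper_gap x (fset F))
   | Base _ \<Rightarrow> 0)"

definition to_bsd :: "('a vtx \<Rightarrow> real) \<Rightarrow> 'a vtx \<Rightarrow> real" where
  "to_bsd x z = to_bsd_weight x z / (\<Sum>w | to_bsd_weight x w \<noteq> 0. to_bsd_weight x w)"

lemma upper_gap_eq:
  assumes x: "x \<in> closed_simplex \<sigma>" and "finite \<sigma>"
  shows "upper_gap x S = Min (x ` S) - Max (insert 0 (x ` (\<sigma> - S)))"
proof -
  have "insert 0 (x ` ({v. x v \<noteq> 0} - S)) = insert 0 (x ` (\<sigma> - S))"
    using closed_simplex_outside[OF x] by force
  then show ?thesis
    unfolding upper_gap_def by simp
qed

lemma to_bsd_weight_bary: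
  "finite S \<Longrightarrow> S \<noteq> {} \<Longrightarrow> to_bsd_weight x (bary S) = real (card S) * max 0 (upper_gap x S)"
  unfolding to_bsd_weight_def by (simp add: Abs_fset_inverse)

lemma to_bsd_weight_nonneg: "0 \<le> to_bsd_weight x z"
  unfolding to_bsd_weight_def by (auto split: vtx.split)

lemma upper_set_subset: "x \<in> closed_simplex \<sigma> \<Longrightarrow> 0 < t \<Longrightarrow> {u. t \<le> x u} \<subseteq> \<sigma>"
  using closed_simplex_outside by fastforce

lemma to_bsd_weight_neq_0E:
  assumes "to_bsd_weight x z \<noteq> 0"
  obtains S where "z = bary S" "finite S"
proof -
  obtain F where "z = Bary F"
    using assms unfolding to_bsd_weight_def by (cases z) auto
  then show thesis
    using that[of "fset F"] by (simp add: fset_inverse)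
qed

lemma to_bsd_weight_bary_neq_0:
  assumes x: "x \<in> closed_simplex \<sigma>" "finite \<sigma>" and S: "finite S" "to_bsd_weight x (bary S) \<noteq> 0"
  shows "S \<noteq> {}" "0 < Min (x ` S)" "S = {u. Min (x ` S) \<le> x u}"
proof -
  define M where "M = Max (insert 0 (x ` (\<sigma> - S)))"
  have "to_bsd_weight x (bary S) = (if S = {} then 0 else real (card S) * max 0 (Min (x ` S) - M))"
    unfolding to_bsd_weight_def M_def upper_gap_eq[OF x] using S(1) by (simp add: Abs_fset_inverse)
  then have "S \<noteq> {}" and M_less: "M < Min (x ` S)"
    using S(2) by (auto split: if_splits simp: max_def)
  then show "S \<noteq> {}"
    by blast
  have "0 \<le> M"
    unfolding M_def using x(2) by (intro Max_ge) auto
  then show "0 < Min (x ` S)"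
    using M_less by linarith
  have outside: "x u \<le> M" if "u \<notin> S" for u
  proof (cases "u \<in> \<sigma>")
    case True
    then show ?thesis
      unfolding M_def using x(2) that by (intro Max_ge) auto
  next
    case False
    then show ?thesis
      using closed_simplex_outside[OF x(1)] \<open>0 \<le> M\<close> by simp
  qed
  show "S = {u. Min (x ` S) \<le> x u}"
  proof (intro set_eqI iffI)
    fix u assume "u \<in> S"
    then show "u \<in> {u. Min (x ` S) \<le> x u}"
      using S(1) by simp
  next
    fix u assume "u \<in> {u. Min (x ` S) \<le> x u}"
    then show "u \<in> S"
      using outside M_less by (meson leD le_less_trans mem_Collect_eq)
  qed
qed

lemma to_bsd_weight_support_subset:
  assumes "x \<in> closed_simplex \<sigma>" "finite \<sigma>"
  shows "{z. to_bsd_weight x z \<noteq> 0} \<subseteq> bary ` Pow \<sigma>"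
proof
  fix z assume "z \<in> {z. to_bsd_weight x z \<noteq> 0}"
  then obtain S where S: "z = bary S" "finite S" "to_bsd_weight x (bary S) \<noteq> 0"
    by (auto elim: to_bsd_weight_neq_0E)
  then have "S \<subseteq> \<sigma>"
    using to_bsd_weight_bary_neq_0[OF assms S(2,3)] upper_set_subset[OF assms(1)] by blast
  then show "z \<in> bary ` Pow \<sigma>"
    using S(1) by blast
qed

lemma to_bsd_weight_pos:
  assumes x: "x \<in> closed_simplex \<sigma>" and \<sigma>: "finite \<sigma>" "\<sigma> \<noteq> {}"
  shows "\<exists>z. 0 < to_bsd_weight x z"
proof -
  define m where "m = Max (x ` \<sigma>)"
  define S where "S = {u. m \<le> x u}"
  have "\<not> (\<forall>u\<in>\<sigma>. x u \<le> 0)"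
    using sum_nonpos[of \<sigma> x] closed_simplex_sum[OF x] by fastforce
  then obtain u where "u \<in> \<sigma>" "0 < x u"
    by auto
  moreover have "x u \<le> m"
    unfolding m_def using \<sigma> \<open>u \<in> \<sigma>\<close> by (intro Max_ge) auto
  ultimately have "0 < m"
    by linarith
  then have "S \<subseteq> \<sigma>"
    unfolding S_def using upper_set_subset[OF x] by blast
  have "m \<in> x ` \<sigma>"
    unfolding m_def using \<sigma> by (intro Max_in) auto
  then have "S \<noteq> {}"
    unfolding S_def by auto
  have "x u \<le> m" if "u \<in> \<sigma>" for u
    unfolding m_def using \<sigma> that by (intro Max_ge) auto
  then have "x ` S = {m}"
    using \<open>S \<subseteq> \<sigma>\<close> \<open>S \<noteq> {}\<close> unfolding S_def by fastforce
  moreover have "Max (insert 0 (x ` (\<sigma> - S))) < m"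
    using \<sigma> \<open>0 < m\<close> unfolding S_def by (subst Max_less_iff) auto
  ultimately have "0 < upper_gap x S"
    unfolding upper_gap_eq[OF x \<sigma>(1)] by simp
  moreover have "finite S"
    using \<open>S \<subseteq> \<sigma>\<close> \<sigma>(1) finite_subset by blast
  ultimately have "0 < to_bsd_weight x (bary S)"
    using \<open>S \<noteq> {}\<close> by (simp add: to_bsd_weight_bary card_gt_0_iff)
  then show ?thesis ..
qed

lemma sum_to_bsd_weight_pos:
  assumes x: "x \<in> closed_simplex \<sigma>" and \<sigma>: "finite \<sigma>" "\<sigma> \<noteq> {}"
  shows "0 < (\<Sum>w | to_bsd_weight x w \<noteq> 0. to_bsd_weight x w)"
proof -
  obtain z where z: "0 < to_bsd_weight x z"
    using to_bsd_weight_pos[OF assms] ..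
  have "finite {w. to_bsd_weight x w \<noteq> 0}"
    using to_bsd_weight_support_subset[OF x \<sigma>(1)] \<sigma>(1) finite_subset by blast
  then have "to_bsd_weight x z \<le> (\<Sum>w | to_bsd_weight x w \<noteq> 0. to_bsd_weight x w)"
    using z to_bsd_weight_nonneg by (intro member_le_sum) auto
  then show ?thesis
    using z by linarith
qed

lemma to_bsd_in_closed_simplex:
  assumes x: "x \<in> closed_simplex \<sigma>" and \<sigma>: "finite \<sigma>" "\<sigma> \<noteq> {}"
  shows "to_bsd x \<in> closed_simplex {z. to_bsd_weight x z \<noteq> 0}"
proof -
  have pos: "0 < (\<Sum>w | to_bsd_weight x w \<noteq> 0. to_bsd_weight x w)"
    by (rule sum_to_bsd_weight_pos[OF assms])
  then show ?thesis
    unfolding closed_simplex_def to_bsd_def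
    by (auto simp: to_bsd_weight_nonneg sum_divide_distrib[symmetric])
qed

lemma upper_sets_nested: "{u. a \<le> f u} \<subseteq> {u. b \<le> f u} \<or> {u. b \<le> f u} \<subseteq> {u. a \<le> f u}"
  for a b :: "'b::linorder"
  by (cases "a \<le> b") auto

lemma to_bsd_support_in_bsd:
  assumes L: "simplicial_complex L" and \<sigma>: "\<sigma> \<in> L" and x: "x \<in> closed_simplex \<sigma>"
  shows "{z. to_bsd_weight x z \<noteq> 0} \<in> bsd L"
proof -
  have fin: "finite \<sigma>" and ne: "\<sigma> \<noteq> {}"
    using L \<sigma> simplicial_complex_finite simplicial_complex_nonempty by blast+
  define D where "D = {z. to_bsd_weight x z \<noteq> 0}"
  define C where "C = {S \<in> Pow \<sigma>. bary S \<in> D}"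
  have C: "S \<noteq> {}" "S \<subseteq> \<sigma>" "\<exists>m. S = {u. m \<le> x u}" if "S \<in> C" for S
  proof -
    have "S \<subseteq> \<sigma>" "to_bsd_weight x (bary S) \<noteq> 0"
      using that unfolding C_def D_def by auto
    moreover have "finite S"
      using \<open>S \<subseteq> \<sigma>\<close> fin finite_subset by blast
    ultimately show "S \<noteq> {}" "S \<subseteq> \<sigma>" "\<exists>m. S = {u. m \<le> x u}"
      using to_bsd_weight_bary_neq_0[OF x fin] by blast+
  qed
  have "D = bary ` C"
    using to_bsd_weight_support_subset[OF x fin] unfolding C_def D_def by blast
  moreover have "finite C"
    using fin unfolding C_def by simp
  moreover have "C \<noteq> {}"
    using to_bsd_weight_pos[OF x fin ne] \<open>D = bary ` C\<close> unfolding D_def by auto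
  moreover have "C \<subseteq> L"
    using C simplicial_complex_face[OF L \<sigma>] by blast
  moreover have "chain\<^sub>\<subseteq> C"
    unfolding chain_subset_def
  proof (intro ballI)
    fix S1 S2 assume "S1 \<in> C" "S2 \<in> C"
    then obtain m1 m2 where "S1 = {u. m1 \<le> x u}" "S2 = {u. m2 \<le> x u}"
      using C(3) by blast
    then show "S1 \<subseteq> S2 \<or> S2 \<subseteq> S1"
      using upper_sets_nested[of m1 x m2] by simp
  qed
  ultimately show ?thesis
    unfolding D_def[symmetric] mem_bsd by blast
qed

lemma continuous_on_Min_coordinates:
  assumes "finite S" "S \<noteq> {}"
  shows "continuous_on A (\<lambda>x::'v \<Rightarrow> real. Min (x ` S))"
  using assms
proof (induction S rule: finite_ne_induct)
  case (insert a F)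
  have "continuous_on A (\<lambda>x::'v \<Rightarrow> real. min (x a) (Min (x ` F)))"
    by (intro continuous_on_min continuous_on_coordinate insert.IH)
  then show ?case
    using insert.hyps by simp
qed (simp add: continuous_on_coordinate)

lemma continuous_on_Max_coordinates:
  assumes "finite T"
  shows "continuous_on A (\<lambda>x::'v \<Rightarrow> real. Max (insert 0 (x ` T)))"
  using assms
proof (induction T rule: finite_induct)
  case (insert a F)
  have "continuous_on A (\<lambda>x::'v \<Rightarrow> real. max (x a) (Max (insert 0 (x ` F))))"
    by (intro continuous_on_max continuous_on_coordinate insert.IH)
  moreover have "Max (insert 0 (x ` insert a F)) = max (x a) (Max (insert 0 (x ` F)))" for x :: "'v \<Rightarrow> real"
  proof -
    have "insert 0 (x ` insert a F) = insert (x a) (insert 0 (x ` F))"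
      by auto
    then show ?thesis
      using Max_insert[of "insert 0 (x ` F)" "x a"] insert.hyps by simp
  qed
  ultimately show ?case
    by simp
qed simp

lemma continuous_on_to_bsd_weight:
  assumes fin: "finite \<sigma>"
  shows "continuous_on (closed_simplex \<sigma>) (\<lambda>x. to_bsd_weight x z)"
proof (cases "\<exists>S. z = bary S \<and> finite S \<and> S \<noteq> {} \<and> S \<subseteq> \<sigma>")
  case True
  then obtain S where S: "z = bary S" "finite S" "S \<noteq> {}" "S \<subseteq> \<sigma>"
    by blast
  have "continuous_on (closed_simplex \<sigma>)
      (\<lambda>x. real (card S) * max 0 (Min (x ` S) - Max (insert 0 (x ` (\<sigma> - S)))))"
    using S fin
    by (intro continuous_on_mult continuous_on_const continuous_on_max continuous_on_diff
        continuous_on_Min_coordinates continuous_on_Max_coordinates) auto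
  then show ?thesis
    by (rule continuous_on_eq) (simp add: S to_bsd_weight_bary upper_gap_eq[OF _ fin])
next
  case False
  have zero: "to_bsd_weight x z = 0" if x: "x \<in> closed_simplex \<sigma>" for x
  proof (rule ccontr)
    assume "to_bsd_weight x z \<noteq> 0"
    then obtain S where S: "z = bary S" "finite S" "to_bsd_weight x (bary S) \<noteq> 0"
      by (auto elim: to_bsd_weight_neq_0E)
    then have "S \<noteq> {}" "S \<subseteq> \<sigma>"
      using to_bsd_weight_bary_neq_0[OF x fin S(2,3)] upper_set_subset[OF x] by blast+
    then show False
      using False S by blast
  qed
  have "continuous_on (closed_simplex \<sigma>) (\<lambda>x. 0::real)"
    by simp
  then show ?thesis
    by (rule continuous_on_eq) (simp add: zero)
qed

lemma continuous_on_to_bsd: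
  assumes \<sigma>: "finite \<sigma>" "\<sigma> \<noteq> {}"
  shows "continuous_on (closed_simplex \<sigma>) to_bsd"
proof (rule continuous_on_coordinatewise_then_product)
  fix z
  have support: "(\<Sum>w | to_bsd_weight x w \<noteq> 0. to_bsd_weight x w) = sum (to_bsd_weight x) (bary ` Pow \<sigma>)"
    if "x \<in> closed_simplex \<sigma>" for x
    using to_bsd_weight_support_subset[OF that \<sigma>(1)] \<sigma>(1) by (intro sum.mono_neutral_left) auto
  have "continuous_on (closed_simplex \<sigma>) (\<lambda>x. to_bsd_weight x z / sum (to_bsd_weight x) (bary ` Pow \<sigma>))"
    using sum_to_bsd_weight_pos[OF _ \<sigma>] support
    by (intro continuous_on_divide continuous_on_sum continuous_on_to_bsd_weight \<sigma>) fastforce+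
  then show "continuous_on (closed_simplex \<sigma>) (\<lambda>x. to_bsd x z)"
    by (rule continuous_on_eq) (simp add: to_bsd_def support)
qed

lemma continuous_map_to_bsd:
  assumes L: "simplicial_complex L"
  shows "continuous_map (realization L) (realization (bsd L)) to_bsd"
proof (rule continuous_map_from_realization)
  fix \<sigma> assume \<sigma>: "\<sigma> \<in> L"
  have fin: "finite \<sigma>" and ne: "\<sigma> \<noteq> {}"
    using L \<sigma> simplicial_complex_finite simplicial_complex_nonempty by blast+
  define T where "T = {\<tau> \<in> bsd L. \<tau> \<subseteq> bary ` Pow \<sigma>}"
  show "continuous_map (top_of_set (closed_simplex \<sigma>)) (realization (bsd L)) to_bsd"
  proof (rule continuous_map_into_realization[where T=T])
    show "continuous_map (top_of_set (closed_simplex \<sigma>)) euclidean to_bsd"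
      using continuous_on_to_bsd[OF fin ne] by simp
    have "T \<subseteq> Pow (bary ` Pow \<sigma>)"
      unfolding T_def by blast
    then show "finite T"
      using fin finite_subset by blast
    show "T \<subseteq> bsd L" "\<And>\<tau>. \<tau> \<in> T \<Longrightarrow> finite \<tau>"
      using simplicial_complex_finite[OF simplicial_complex_bsd[OF L]] unfolding T_def by auto
    fix x assume "x \<in> topspace (top_of_set (closed_simplex \<sigma>))"
    then have x: "x \<in> closed_simplex \<sigma>"
      by simp
    have "{z. to_bsd_weight x z \<noteq> 0} \<in> T"
      unfolding T_def using to_bsd_support_in_bsd[OF L \<sigma> x] to_bsd_weight_support_subset[OF x fin] by blast
    then show "to_bsd x \<in> polyhedron T"
      using to_bsd_in_closed_simplex[OF x fin ne] by blast
  qed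
qed

lemma from_bsd_mono:
  assumes L: "simplicial_complex L" and C: "C \<subseteq> L" "finite C"
    and y: "y \<in> closed_simplex (bary ` C)" and uw: "\<forall>s\<in>C. u \<in> s \<longrightarrow> w \<in> s"
  shows "from_bsd y u \<le> from_bsd y w"
proof -
  have fin: "\<And>s. s \<in> C \<Longrightarrow> finite s"
    using C L simplicial_complex_finite by blast
  have from_bsd_y: "from_bsd y = (\<lambda>u. \<Sum>s\<in>C. y (bary s) * bary_weight (bary s) u)"
    by (rule from_bsd_eq_sum_chain[OF y C(2) fin])
  have "bary_weight (bary s) u \<le> bary_weight (bary s) w" if "s \<in> C" for s
    using uw that fin[OF that] by (auto simp: bary_weight_bary)
  then show ?thesis
    unfolding from_bsd_y by (intro sum_mono mult_left_mono closed_simplex_nonneg[OF y])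
qed

text \<open>The upper set is a union of members of the chain \<open>C\<close>, because \<^const>\<open>from_bsd\<close> is
  monotone along \<open>C\<close>.\<close>

lemma upper_set_from_bsd_in_chain:
  assumes L: "simplicial_complex L" and C: "C \<subseteq> L" "finite C" "chain\<^sub>\<subseteq> C"
    and y: "y \<in> closed_simplex (bary ` C)" and t: "0 < t"
    and ne: "{u. t \<le> from_bsd y u} \<noteq> {}"
  shows "{u. t \<le> from_bsd y u} \<in> C"
proof -
  define S where "S = {u. t \<le> from_bsd y u}"
  have x: "from_bsd y \<in> closed_simplex (\<Union>C)"
    by (rule from_bsd_in_closed_simplex[OF L C(1,2) y])
  have "\<exists>c\<in>C. u \<in> c \<and> c \<subseteq> S" if "u \<in> S" for u
  proof -
    define Cu where "Cu = {c \<in> C. u \<in> c}"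
    have "u \<in> \<Union>C"
      using that upper_set_subset[OF x t] unfolding S_def by blast
    then have "\<Inter>Cu \<in> Cu"
      using C(2,3) Inter_in_chain[of Cu UNIV] unfolding Cu_def chain_subset_alt_def
      by (auto intro: subset_chain_def[THEN iffD2] dest: subset.chain_total)
    moreover have "\<Inter>Cu \<subseteq> S"
    proof
      fix w assume "w \<in> \<Inter>Cu"
      then have "from_bsd y u \<le> from_bsd y w"
        unfolding Cu_def by (intro from_bsd_mono[OF L C(1,2) y]) blast
      then show "w \<in> S"
        using \<open>u \<in> S\<close> unfolding S_def by auto
    qed
    ultimately show ?thesis
      unfolding Cu_def by blast
  qed
  then have "S = \<Union>{c \<in> C. c \<subseteq> S}" "{c \<in> C. c \<subseteq> S} \<noteq> {}"
    using ne unfolding S_def by blast+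
  moreover have "\<Union>{c \<in> C. c \<subseteq> S} \<in> {c \<in> C. c \<subseteq> S}"
    using calculation(2) C(2,3) unfolding chain_subset_alt_def
    by (intro Union_in_chain) (auto simp: subset_chain_def)
  ultimately show ?thesis
    unfolding S_def by auto
qed

lemma to_bsd_from_bsd_in_closed_simplex:
  assumes L: "simplicial_complex L" and C: "C \<subseteq> L" "finite C" "chain\<^sub>\<subseteq> C" "\<Union>C \<in> C"
    and y: "y \<in> closed_simplex (bary ` C)"
  shows "to_bsd (from_bsd y) \<in> closed_simplex (bary ` C)"
proof -
  define x where "x = from_bsd y"
  have top: "finite (\<Union>C)" "\<Union>C \<noteq> {}"
    using C L simplicial_complex_finite simplicial_complex_nonempty by blast+
  have x: "x \<in> closed_simplex (\<Union>C)"
    unfolding x_def by (rule from_bsd_in_closed_simplex[OF L C(1,2) y])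
  have "{z. to_bsd_weight x z \<noteq> 0} \<subseteq> bary ` C"
  proof
    fix z assume "z \<in> {z. to_bsd_weight x z \<noteq> 0}"
    then obtain S where S: "z = bary S" "finite S" "to_bsd_weight x (bary S) \<noteq> 0"
      by (auto elim: to_bsd_weight_neq_0E)
    then have "S \<noteq> {}" "0 < Min (x ` S)" "S = {u. Min (x ` S) \<le> x u}"
      using to_bsd_weight_bary_neq_0[OF x top(1) S(2,3)] by blast+
    then have "S \<in> C"
      unfolding x_def using upper_set_from_bsd_in_chain[OF L C(1-3) y] by metis
    then show "z \<in> bary ` C"
      using S(1) by blast
  qed
  then show ?thesis
    using closed_simplex_mono[OF _ _ to_bsd_in_closed_simplex[OF x top]] C(2) unfolding x_def by blast
qed

text \<open>Since \<^term>\<open>to_bsd \<circ> from_bsd\<close> is homotopic to the identity, \<open>|bsd L|\<close> is dominated by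
  \<open>|L|\<close>; this is all we need of the homeomorphism between the two.\<close>

lemma contractible_realization_bsd:
  assumes L: "simplicial_complex L" and contr: "contractible_space (realization L)"
  shows "contractible_space (realization (bsd L))"
proof -
  obtain a where "homotopic_with (\<lambda>x. True) (realization L) (realization L) id (\<lambda>x. a)"
    using contr unfolding contractible_space_def by blast
  then have "homotopic_with (\<lambda>x. True) (realization (bsd L)) (realization (bsd L))
      (to_bsd \<circ> id \<circ> from_bsd) (to_bsd \<circ> (\<lambda>x. a) \<circ> from_bsd)"
    using continuous_map_from_bsd[OF L] continuous_map_to_bsd[OF L]
    by (intro homotopic_with_compose_continuous_map_left homotopic_with_compose_continuous_map_right) auto
  then have "homotopic_with (\<lambda>x. True) (realization (bsd L)) (realization (bsd L))
      (to_bsd \<circ> from_bsd) (\<lambda>x. to_bsd a)"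
    by (simp add: o_def)
  moreover have "homotopic_with (\<lambda>x. True) (realization (bsd L)) (realization (bsd L)) id (to_bsd \<circ> from_bsd)"
  proof (rule homotopic_id_straight_line[OF simplicial_complex_bsd[OF L]])
    fix \<tau> assume \<tau>: "\<tau> \<in> bsd L"
    then obtain C where C: "\<tau> = bary ` C" "C \<subseteq> L" "finite C" "chain\<^sub>\<subseteq> C" "\<Union>C \<in> C"
      by (elim mem_bsdE)
    have "finite (\<Union>C)" "\<Union>C \<noteq> {}"
      using C L simplicial_complex_finite simplicial_complex_nonempty by blast+
    then have "continuous_on (from_bsd ` closed_simplex \<tau>) to_bsd"
      using from_bsd_in_closed_simplex[OF L C(2,3)] C(1)
      by (intro continuous_on_subset[OF continuous_on_to_bsd]) auto
    then show "continuous_on (closed_simplex \<tau>) (to_bsd \<circ> from_bsd)"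
      using continuous_on_from_bsd[of \<tau>] C(1,3) by (intro continuous_on_compose) auto
    show "\<exists>\<tau>'\<in>bsd L. \<tau> \<subseteq> \<tau>' \<and> (to_bsd \<circ> from_bsd) ` closed_simplex \<tau> \<subseteq> closed_simplex \<tau>'"
      using to_bsd_from_bsd_in_closed_simplex[OF L C(2-5)] C(1) \<tau> by auto
  qed
  ultimately show ?thesis
    unfolding contractible_space_def by (meson homotopic_with_trans)
qed

section \<open>Carriers and walks in iterated subdivisions\<close>

definition face_closure :: "'v set set \<Rightarrow> 'v set set" where
  "face_closure S = {\<tau>. \<tau> \<noteq> {} \<and> (\<exists>\<sigma>\<in>S. \<tau> \<subseteq> \<sigma>)}"

lemma face_closure_mono: "S \<subseteq> T \<Longrightarrow> face_closure S \<subseteq> face_closure T"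
  unfolding face_closure_def by blast

lemma face_closure_singleton_mono: "\<sigma> \<subseteq> \<tau> \<Longrightarrow> face_closure {\<sigma>} \<subseteq> face_closure {\<tau>}"
  unfolding face_closure_def by auto

lemma face_closure_subset: "simplicial_complex K \<Longrightarrow> S \<subseteq> K \<Longrightarrow> face_closure S \<subseteq> K"
  unfolding face_closure_def using simplicial_complex_face by blast

lemma simplicial_complex_face_closure:
  assumes "\<And>\<sigma>. \<sigma> \<in> S \<Longrightarrow> finite \<sigma>"
  shows "simplicial_complex (face_closure S)"
  unfolding simplicial_complex_def
proof (intro conjI ballI allI impI)
  fix \<tau> assume "\<tau> \<in> face_closure S"
  then obtain \<sigma> where "\<sigma> \<in> S" "\<tau> \<subseteq> \<sigma>" "\<tau> \<noteq> {}"
    unfolding face_closure_def by blast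
  then show "finite \<tau>" "\<tau> \<noteq> {}"
    using assms finite_subset by blast+
  fix \<rho> assume "\<rho> \<subseteq> \<tau> \<and> \<rho> \<noteq> {}"
  then show "\<rho> \<in> face_closure S"
    using \<open>\<sigma> \<in> S\<close> \<open>\<tau> \<subseteq> \<sigma>\<close> unfolding face_closure_def by blast
qed

text \<open>For a vertex \<open>z\<close> of the \<open>n\<close>-th subdivision of \<open>L\<close>, \<^term>\<open>carrier n z\<close> is the vertex set
  of the smallest simplex of \<open>L\<close> containing \<open>z\<close>, when the subdivision is drawn inside \<open>L\<close>.\<close>

fun carrier :: "nat \<Rightarrow> 'a vtx \<Rightarrow> 'a vtx set" where
  "carrier 0 z = {z}"
| "carrier (Suc n) z = (case z of Bary F \<Rightarrow> (\<Union>w\<in>fset F. carrier n w) | Base _ \<Rightarrow> {})"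

lemma carrier_bary [simp]: "finite s \<Longrightarrow> carrier (Suc n) (bary s) = (\<Union>w\<in>s. carrier n w)"
  by (simp add: Abs_fset_inverse)

lemma carrier_Suc_subset: "w \<in> carrier 1 z \<Longrightarrow> carrier n w \<subseteq> carrier (Suc n) z"
  by (cases z) auto

lemma carrier_Suc_eq: "carrier (Suc n) z = (\<Union>w\<in>carrier n z. carrier 1 w)"
proof (induction n arbitrary: z)
  case (Suc n)
  show ?case
  proof (cases z)
    case (Bary F)
    have "carrier (Suc (Suc n)) z = (\<Union>w\<in>fset F. \<Union>w'\<in>carrier n w. carrier 1 w')"
      using Bary Suc.IH by simp
    also have "\<dots> = (\<Union>w'\<in>(\<Union>w\<in>fset F. carrier n w). carrier 1 w')"
      by blast
    finally show ?thesis
      using Bary by simp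
  qed simp
qed simp

lemma bsd_pow_carrier:
  assumes L: "simplicial_complex L" and "\<sigma> \<in> (bsd ^^ n) L"
  shows "(\<Union>z\<in>\<sigma>. carrier n z) \<in> L \<and> \<sigma> \<in> (bsd ^^ n) (face_closure {\<Union>z\<in>\<sigma>. carrier n z})"
  using assms(2)
proof (induction n arbitrary: \<sigma>)
  case 0
  then have "\<sigma> \<in> face_closure {\<sigma>}"
    using simplicial_complex_nonempty[OF L] unfolding face_closure_def by auto
  then show ?case
    using 0 by simp
next
  case (Suc n)
  then have "\<sigma> \<in> bsd ((bsd ^^ n) L)"
    by simp
  then obtain C where C: "\<sigma> = bary ` C" "C \<subseteq> (bsd ^^ n) L" "finite C" "C \<noteq> {}" "chain\<^sub>\<subseteq> C" "\<Union>C \<in> C"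
    by (elim mem_bsdE)
  have fin: "\<And>c. c \<in> C \<Longrightarrow> finite c"
    using C(2) simplicial_complex_finite[OF simplicial_complex_bsd_pow[OF L]] by blast
  define top where "top = (\<Union>z\<in>\<Union>C. carrier n z)"
  have "(\<Union>z\<in>\<sigma>. carrier (Suc n) z) = (\<Union>c\<in>C. carrier (Suc n) (bary c))"
    unfolding C(1) by blast
  also have "\<dots> = (\<Union>c\<in>C. \<Union>z\<in>c. carrier n z)"
    by (rule SUP_cong[OF refl]) (rule carrier_bary[OF fin])
  finally have carrier_eq: "(\<Union>z\<in>\<sigma>. carrier (Suc n) z) = top"
    unfolding top_def by blast
  have "C \<subseteq> (bsd ^^ n) (face_closure {top})"
  proof
    fix c assume "c \<in> C"
    then have "c \<in> (bsd ^^ n) L"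
      using C(2) by blast
    then have "c \<in> (bsd ^^ n) (face_closure {\<Union>z\<in>c. carrier n z})"
      using Suc.IH[of c] by blast
    moreover have "(\<Union>z\<in>c. carrier n z) \<subseteq> top"
      unfolding top_def using \<open>c \<in> C\<close> by blast
    then have "face_closure {\<Union>z\<in>c. carrier n z} \<subseteq> face_closure {top}"
      by (rule face_closure_singleton_mono)
    ultimately show "c \<in> (bsd ^^ n) (face_closure {top})"
      using bsd_pow_mono by blast
  qed
  then have "\<sigma> \<in> (bsd ^^ Suc n) (face_closure {top})"
    using C(1,3-5) unfolding mem_bsd funpow.simps o_apply by blast
  moreover have "\<Union>C \<in> (bsd ^^ n) L"
    using C(2,6) by blast
  then have "top \<in> L"
    unfolding top_def using Suc.IH by blast
  ultimately show ?case
    unfolding carrier_eq by blast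
qed

lemma bsd_pow_carrier_vertex:
  assumes "simplicial_complex L" "\<sigma> \<in> (bsd ^^ n) L" "y \<in> \<sigma>"
  shows "carrier n y \<in> L"
  using bsd_pow_carrier[OF assms(1), of "{y}"] assms
    simplicial_complex_face[OF simplicial_complex_bsd_pow[OF assms(1)], of \<sigma> n "{y}"]
  by auto

inductive walk :: "'v set set \<Rightarrow> nat \<Rightarrow> 'v \<Rightarrow> 'v \<Rightarrow> bool" for K where
  walk_refl: "walk K 0 y y"
| walk_step: "\<sigma> \<in> K \<Longrightarrow> y \<in> \<sigma> \<Longrightarrow> y' \<in> \<sigma> \<Longrightarrow> walk K n y' z \<Longrightarrow> walk K (Suc n) y z"

lemma walk_if_links: "links K p v w \<Longrightarrow> walk K (length p) v w"
proof (induction p arbitrary: v)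
  case Nil
  then show ?case
    by (simp add: links_def)
next
  case (Cons \<sigma> p)
  then have \<sigma>: "\<sigma> \<in> K" "v \<in> \<sigma>"
    unfolding links_def by auto
  show ?case
  proof (cases "p = []")
    case True
    then have "w \<in> \<sigma>"
      using Cons.prems unfolding links_def by simp
    then show ?thesis
      using True walk_step[OF \<sigma> _ walk_refl] by simp
  next
    case False
    have "Suc 0 < length (\<sigma> # p)"
      using False by simp
    then have "(\<sigma> # p) ! 0 \<inter> (\<sigma> # p) ! Suc 0 \<noteq> {}"
      using Cons.prems unfolding links_def by blast
    then obtain x where x: "x \<in> \<sigma>" "x \<in> hd p"
      using False by (auto simp: hd_conv_nth)
    have "links K p x w"
      unfolding links_def
    proof (intro conjI allI impI ballI)
      fix i assume "Suc i < length p"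
      then show "p ! i \<inter> p ! Suc i \<noteq> {}"
        using Cons.prems unfolding links_def by (metis Suc_less_eq length_Cons nth_Cons_Suc)
    qed (use Cons.prems False x in \<open>auto simp: links_def\<close>)
    then show ?thesis
      using walk_step[OF \<sigma> x(1) Cons.IH] by simp
  qed
qed

lemma walk_if_link_dist_le:
  assumes "link_dist K v w \<le> enat m"
  obtains n where "n \<le> m" "walk K n v w"
proof -
  have "(INF p\<in>{p. links K p v w}. enat (length p)) < enat (Suc m)"
    using assms unfolding link_dist_def by (simp add: le_less_trans)
  then obtain p where "links K p v w" "length p < Suc m"
    unfolding INF_less_iff by auto
  then show thesis
    by (intro that[of "length p"]) (simp_all add: walk_if_links)
qed

lemma bsd_adjacent_nested:
  assumes L: "simplicial_complex L" and "\<sigma> \<in> bsd L" "y \<in> \<sigma>" "y' \<in> \<sigma>"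
  obtains s s' where "s \<in> L" "s' \<in> L" "y = bary s" "y' = bary s'" "s \<subseteq> s' \<or> s' \<subseteq> s"
proof -
  obtain C where C: "\<sigma> = bary ` C" "C \<subseteq> L" "chain\<^sub>\<subseteq> C"
    using assms(2) by (elim mem_bsdE)
  then obtain s s' where "s \<in> C" "s' \<in> C" "y = bary s" "y' = bary s'"
    using assms(3,4) by blast
  then show thesis
    using that C(2,3) unfolding chain_subset_def by blast
qed

text \<open>Two steps of a walk in \<open>bsd L\<close> pass through nested simplices of \<open>L\<close>, which yields a
  single step between their vertices; hence walks shrink to half their length.\<close>

lemma walk_bsd_halve:
  assumes L: "simplicial_complex L"
  shows "walk (bsd L) n y z \<Longrightarrow> y \<in> \<sigma> \<Longrightarrow> \<sigma> \<in> bsd L \<Longrightarrow>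
    \<exists>w\<in>carrier 1 y. \<exists>w'\<in>carrier 1 z. \<exists>k\<le>(n + 1) div 2. walk L k w w'"
proof (induction n arbitrary: y z \<sigma> rule: less_induct)
  case (less n)
  obtain s where s: "s \<in> L" "y = bary s"
    using bsd_adjacent_nested[OF L less.prems(3,2,2)] by metis
  have "finite s" "s \<noteq> {}"
    using s simplicial_complex_finite[OF L] simplicial_complex_nonempty[OF L] by blast+
  then have s_ne: "s \<noteq> {}" and carrier_y: "carrier 1 y = s"
    using s(2) by simp_all
  show ?case
  proof (cases n)
    case 0
    then have "z = y"
      using less.prems(1) by (auto elim: walk.cases)
    then show ?thesis
      using carrier_y s_ne walk_refl by fastforce
  next
    case (Suc n1)
    then obtain \<sigma>1 y1 where step1: "\<sigma>1 \<in> bsd L" "y \<in> \<sigma>1" "y1 \<in> \<sigma>1" "walk (bsd L) n1 y1 z"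
      using less.prems(1) by (auto elim: walk.cases)
    obtain s1 where s1: "s1 \<in> L" "y1 = bary s1" "s \<subseteq> s1 \<or> s1 \<subseteq> s"
      using bsd_adjacent_nested[OF L step1(1-3)] s by (metis bary_inject simplicial_complex_finite[OF L])
    have "finite s1" "s1 \<noteq> {}"
      using s1 simplicial_complex_finite[OF L] simplicial_complex_nonempty[OF L] by blast+
    then have carrier_y1: "carrier 1 y1 = s1" "s1 \<noteq> {}"
      using s1(2) by simp_all
    obtain w where w: "w \<in> s" "w \<in> s1"
      using s1(3) s_ne carrier_y1(2) by blast
    show ?thesis
    proof (cases n1)
      case 0
      then have "z = y1"
        using step1(4) by (auto elim: walk.cases)
      then show ?thesis
        using w carrier_y carrier_y1 walk_refl by fastforce
    next
      case (Suc n2)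
      then obtain \<sigma>2 y2 where step2: "\<sigma>2 \<in> bsd L" "y1 \<in> \<sigma>2" "y2 \<in> \<sigma>2" "walk (bsd L) n2 y2 z"
        using step1(4) by (auto elim: walk.cases)
      obtain s2 where s2: "s2 \<in> L" "y2 = bary s2" "s1 \<subseteq> s2 \<or> s2 \<subseteq> s1"
        using bsd_adjacent_nested[OF L step2(1-3)] s1 by (metis bary_inject simplicial_complex_finite[OF L])
      obtain x w' k where IH: "x \<in> carrier 1 y2" "w' \<in> carrier 1 z" "k \<le> (n2 + 1) div 2" "walk L k x w'"
        using less.IH[of n2 y2 z \<sigma>2] step2 \<open>n = Suc n1\<close> Suc by auto
      have "finite s2"
        using s2(1) by (rule simplicial_complex_finite[OF L])
      then have "x \<in> s2"
        using IH(1) s2(2) by simp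
      then have "walk L (Suc k) w w'"
        using s1 s2 w walk_step[OF _ _ _ IH(4)] by (metis Un_absorb1 Un_absorb2 UnI1 UnI2)
      moreover have "Suc k \<le> (n + 1) div 2"
        using IH(3) \<open>n = Suc n1\<close> Suc by simp
      ultimately show ?thesis
        using w(1) carrier_y IH(2) by blast
    qed
  qed
qed

lemma bsd_pow_walk_carriers_meet:
  assumes L: "simplicial_complex L"
  shows "walk ((bsd ^^ Suc r) L) n y z \<Longrightarrow> n \<le> 2 ^ r \<Longrightarrow> y \<in> \<sigma> \<Longrightarrow> \<sigma> \<in> (bsd ^^ Suc r) L \<Longrightarrow>
    carrier (Suc r) y \<inter> carrier (Suc r) z \<noteq> {}"
proof (induction r arbitrary: n y z \<sigma>)
  case 0
  then have walk: "walk (bsd L) n y z" and "n \<le> 1" "y \<in> \<sigma>" "\<sigma> \<in> bsd L"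
    by simp_all
  then obtain \<sigma>1 where "\<sigma>1 \<in> bsd L" "y \<in> \<sigma>1" "z \<in> \<sigma>1"
    by (cases n) (auto elim!: walk.cases)
  then obtain s s1 where s: "s \<in> L" "s1 \<in> L" "y = bary s" "z = bary s1" "s \<subseteq> s1 \<or> s1 \<subseteq> s"
    by (elim bsd_adjacent_nested[OF L])
  moreover have "finite s" "finite s1" "s \<noteq> {}" "s1 \<noteq> {}"
    using s simplicial_complex_finite[OF L] simplicial_complex_nonempty[OF L] by blast+
  ultimately show ?case
    by auto
next
  case (Suc r)
  define L' where "L' = (bsd ^^ Suc r) L"
  have L': "simplicial_complex L'"
    unfolding L'_def by (rule simplicial_complex_bsd_pow[OF L])
  have "walk (bsd L') n y z" "y \<in> \<sigma>" "\<sigma> \<in> bsd L'"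
    using Suc.prems unfolding L'_def by simp_all
  then obtain w w' k where W: "w \<in> carrier 1 y" "w' \<in> carrier 1 z" "k \<le> (n + 1) div 2" "walk L' k w w'"
    using walk_bsd_halve[OF L'] by blast
  obtain s where s: "s \<in> L'" "y = bary s"
    using bsd_adjacent_nested[OF L' \<open>\<sigma> \<in> bsd L'\<close> \<open>y \<in> \<sigma>\<close> \<open>y \<in> \<sigma>\<close>] by metis
  moreover have "finite s"
    using s(1) by (rule simplicial_complex_finite[OF L'])
  ultimately have "w \<in> s"
    using W(1) by simp
  moreover have "k \<le> 2 ^ r"
    using W(3) Suc.prems(2) by simp
  ultimately have "carrier (Suc r) w \<inter> carrier (Suc r) w' \<noteq> {}"
    using Suc.IH[OF W(4)[unfolded L'_def]] s(1) unfolding L'_def by blast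
  then show ?case
    using carrier_Suc_subset[OF W(1)] carrier_Suc_subset[OF W(2)] by blast
qed

text \<open>A vertex of the \<open>(r + 2)\<close>-th subdivision has carrier a chain of simplices of \<open>L\<close>; any
  vertex of the smallest of them lies in the carriers of all vertices within distance \<open>2 ^ r\<close>.\<close>

lemma bsd_pow_common_carrier_vertex:
  assumes L: "simplicial_complex L" and y: "y \<in> \<sigma>" "\<sigma> \<in> (bsd ^^ Suc (Suc r)) L"
  shows "\<exists>u. \<forall>n z. walk ((bsd ^^ Suc (Suc r)) L) n y z \<longrightarrow> n \<le> 2 ^ r \<longrightarrow>
    u \<in> carrier (Suc (Suc r)) z"
proof -
  have L1: "simplicial_complex (bsd L)"
    by (rule simplicial_complex_bsd[OF L])
  have pow_eq: "(bsd ^^ Suc (Suc r)) L = (bsd ^^ Suc r) (bsd L)"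
    by (simp only: funpow_Suc_right o_apply)
  have \<sigma>: "\<sigma> \<in> (bsd ^^ Suc r) (bsd L)"
    using y(2) pow_eq by simp
  then have "carrier (Suc r) y \<in> bsd L"
    by (rule bsd_pow_carrier_vertex[OF L1 _ y(1)])
  then obtain C where C: "carrier (Suc r) y = bary ` C" "C \<subseteq> L" "finite C" "C \<noteq> {}" "chain\<^sub>\<subseteq> C"
    by (elim mem_bsdE)
  then have "\<Inter>C \<in> C"
    using Inter_in_chain unfolding chain_subset_alt_def by blast
  then obtain u where u: "u \<in> \<Inter>C"
    using C(2) simplicial_complex_nonempty[OF L] by blast
  have "u \<in> carrier (Suc (Suc r)) z" if "walk ((bsd ^^ Suc (Suc r)) L) n y z" "n \<le> 2 ^ r" for n z
  proof -
    have "walk ((bsd ^^ Suc r) (bsd L)) n y z"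
      using that(1) pow_eq by simp
    then have "carrier (Suc r) y \<inter> carrier (Suc r) z \<noteq> {}"
      by (rule bsd_pow_walk_carriers_meet[OF L1 _ that(2) y(1) \<sigma>])
    then obtain v where v: "v \<in> bary ` C" "v \<in> carrier (Suc r) z"
      unfolding C(1) by blast
    then obtain c where "c \<in> C" "v = bary c"
      by (elim imageE)
    then have c: "c \<in> C" "bary c \<in> carrier (Suc r) z"
      using v(2) by simp_all
    moreover have "finite c"
      using c(1) C(2) simplicial_complex_finite[OF L] by blast
    ultimately have "carrier 1 (bary c) = c"
      by simp
    then have "u \<in> carrier 1 (bary c)"
      using u c(1) by blast
    then show ?thesis
      using c(2) carrier_Suc_eq[of "Suc r" z] by blast
  qed
  then show ?thesis
    by blast
qed

lemma diameter_le_common_carrier_vertex: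
  assumes L: "simplicial_complex L" and A: "subcomplex ((bsd ^^ Suc (Suc m)) L) A" "A \<noteq> {}"
    and diam: "diameter ((bsd ^^ Suc (Suc m)) L) A \<le> enat m"
  shows "\<exists>u. \<forall>\<sigma>\<in>A. u \<in> (\<Union>z\<in>\<sigma>. carrier (Suc (Suc m)) z)"
proof -
  have A_sub: "A \<subseteq> (bsd ^^ Suc (Suc m)) L" and A_sc: "simplicial_complex A"
    using A(1) unfolding subcomplex_def by auto
  obtain \<sigma> y where y: "\<sigma> \<in> A" "y \<in> \<sigma>"
    using A(2) simplicial_complex_nonempty[OF A_sc] by blast
  have "\<sigma> \<in> (bsd ^^ Suc (Suc m)) L"
    using y(1) A_sub by blast
  then obtain u where u: "\<And>n z. walk ((bsd ^^ Suc (Suc m)) L) n y z \<Longrightarrow> n \<le> 2 ^ m \<Longrightarrow>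
      u \<in> carrier (Suc (Suc m)) z"
    using bsd_pow_common_carrier_vertex[OF L y(2)] by blast
  have u_carrier: "u \<in> carrier (Suc (Suc m)) z" if "z \<in> vertices A" for z
  proof -
    have "link_dist ((bsd ^^ Suc (Suc m)) L) y z \<le> enat m"
      using diam y that unfolding diameter_def vertices_def by (auto simp: SUP_le_iff)
    then obtain n where n: "n \<le> m" "walk ((bsd ^^ Suc (Suc m)) L) n y z"
      by (rule walk_if_link_dist_le)
    have "m < 2 ^ m"
      by (rule less_exp)
    then have "n \<le> 2 ^ m"
      using n(1) by linarith
    then show ?thesis
      by (rule u[OF n(2)])
  qed
  show ?thesis
  proof (intro exI ballI)
    fix \<sigma>' assume "\<sigma>' \<in> A"
    then obtain z where "z \<in> \<sigma>'"
      using simplicial_complex_nonempty[OF A_sc] by blast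
    then have "u \<in> carrier (Suc (Suc m)) z"
      using \<open>\<sigma>' \<in> A\<close> u_carrier unfolding vertices_def by blast
    then show "u \<in> (\<Union>z\<in>\<sigma>'. carrier (Suc (Suc m)) z)"
      using \<open>z \<in> \<sigma>'\<close> by blast
  qed
qed

section \<open>Fineness of iterated subdivisions\<close>

definition carrier_complex :: "nat \<Rightarrow> 'a vtx set set \<Rightarrow> 'a vtx set set" where
  "carrier_complex n A = face_closure ((\<lambda>\<sigma>. \<Union>z\<in>\<sigma>. carrier n z) ` A)"

lemma carrier_complex_mono: "A \<subseteq> B \<Longrightarrow> carrier_complex n A \<subseteq> carrier_complex n B"
  unfolding carrier_complex_def by (intro face_closure_mono image_mono)

lemma carrier_complex_subset:
  assumes "simplicial_complex L" "A \<subseteq> (bsd ^^ n) L"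
  shows "carrier_complex n A \<subseteq> L"
  unfolding carrier_complex_def
  using assms bsd_pow_carrier[OF assms(1)] by (intro face_closure_subset) blast+

lemma simplicial_complex_carrier_complex:
  assumes "simplicial_complex L" "A \<subseteq> (bsd ^^ n) L"
  shows "simplicial_complex (carrier_complex n A)"
  unfolding carrier_complex_def
  using assms bsd_pow_carrier simplicial_complex_finite
  by (intro simplicial_complex_face_closure) blast

lemma subset_bsd_pow_carrier_complex:
  assumes "simplicial_complex L" "A \<subseteq> (bsd ^^ n) L"
  shows "A \<subseteq> (bsd ^^ n) (carrier_complex n A)"
proof
  fix \<sigma> assume "\<sigma> \<in> A"
  then have "\<sigma> \<in> (bsd ^^ n) (face_closure {\<Union>z\<in>\<sigma>. carrier n z})"
    using assms bsd_pow_carrier by blast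
  moreover have "face_closure {\<Union>z\<in>\<sigma>. carrier n z} \<subseteq> carrier_complex n A"
    unfolding carrier_complex_def using \<open>\<sigma> \<in> A\<close> by (intro face_closure_mono) blast
  ultimately show "\<sigma> \<in> (bsd ^^ n) (carrier_complex n A)"
    using bsd_pow_mono by blast
qed

lemma subcomplex_bsd_pow_carrier_complex:
  assumes "simplicial_complex L" "A \<subseteq> (bsd ^^ n) L"
  shows "subcomplex ((bsd ^^ n) L) ((bsd ^^ n) (carrier_complex n A))"
  unfolding subcomplex_def
  using bsd_pow_mono[OF carrier_complex_subset[OF assms]]
    simplicial_complex_bsd_pow[OF simplicial_complex_carrier_complex[OF assms]] by blast

lemma contractible_realization_bsd_pow:
  "simplicial_complex L \<Longrightarrow> contractible_space (realization L) \<Longrightarrow>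
    contractible_space (realization ((bsd ^^ n) L))"
  by (induction n) (auto intro: contractible_realization_bsd simplicial_complex_bsd_pow)

lemma contractible_carrier_complex:
  assumes L: "simplicial_complex L" and A: "A \<subseteq> (bsd ^^ n) L"
    and u: "\<forall>\<sigma>\<in>A. u \<in> (\<Union>z\<in>\<sigma>. carrier n z)"
  shows "contractible_complex ((bsd ^^ n) (carrier_complex n A))"
proof -
  have "insert u \<tau> \<in> carrier_complex n A" if "\<tau> \<in> carrier_complex n A" for \<tau>
    using that u unfolding carrier_complex_def face_closure_def by blast
  then show ?thesis
    unfolding contractible_complex_def
    using simplicial_complex_carrier_complex[OF L A]
    by (intro contractible_realization_bsd_pow contractible_realization_cone) auto
qed

theorem mainTheorem7:
  fixes K :: "'a set set" and m :: nat
  assumes "simplicial_complex K" and "m > 0"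
  shows "\<exists>k::nat. k > 0 \<and> m_fine m (iterated_bsd k K)"
proof (intro exI conjI)
  define k where "k = Suc (Suc m)"
  define L where "L = (`) Base ` K"
  have L: "simplicial_complex L"
    unfolding L_def by (rule simplicial_complex_image_Base[OF assms(1)])
  have Lk: "iterated_bsd k K = (bsd ^^ k) L"
    unfolding iterated_bsd_def L_def ..
  show "0 < k"
    unfolding k_def by simp
  show "m_fine m (iterated_bsd k K)"
    unfolding m_fine_def Lk
  proof (intro exI[of _ "\<lambda>A. (bsd ^^ k) (carrier_complex k A)"] conjI allI impI)
    fix A assume A: "subcomplex ((bsd ^^ k) L) A \<and> A \<noteq> {} \<and> diameter ((bsd ^^ k) L) A \<le> enat m"
    then have A_sub: "A \<subseteq> (bsd ^^ k) L"
      unfolding subcomplex_def by blast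
    show "subcomplex ((bsd ^^ k) L) ((bsd ^^ k) (carrier_complex k A))"
      by (rule subcomplex_bsd_pow_carrier_complex[OF L A_sub])
    show "A \<subseteq> (bsd ^^ k) (carrier_complex k A)"
      by (rule subset_bsd_pow_carrier_complex[OF L A_sub])
    obtain u where "\<forall>\<sigma>\<in>A. u \<in> (\<Union>z\<in>\<sigma>. carrier k z)"
      using diameter_le_common_carrier_vertex[OF L] A unfolding k_def by blast
    then show "contractible_complex ((bsd ^^ k) (carrier_complex k A))"
      by (rule contractible_carrier_complex[OF L A_sub])
  qed (intro bsd_pow_mono carrier_complex_mono, blast)
qed

end
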